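(* Let $(\Omega,\Sigma,\mathbb{P})$ be a probability space and let $X_t:\Omega\to[0,\infty)$, $t\in\mathbb{N}$, be random variables such that $A:=\limsup_{t\to\infty}(E[X_t])^{1/t}<1$. For $\varepsilon>0$ let $\tau_\varepsilon:=\inf\{t\in\mathbb{N}: X_t<\varepsilon\}$. Then $$\limsup_{\varepsilon\to0^+}\frac{E[\tau_\varepsilon]}{|\log\varepsilon|}\leq\frac{-1}{\log A}.$$
   Context: Convention: if $E[X_t]=\infty$ then $(E[X_t])^{1/t}:=\infty$; if $A=0$ then $\frac{-1}{\log A}:=0$. $\log$ is the natural logarithm. *)

theory Defs
  imports "HOL-Probability.Probability"
begin

definition root_moment :: "nat \<Rightarrow> ennreal \<Rightarrow> ereal" where
  "root_moment t e = (if e = \<infinity> then \<infinity> else ereal (root t (enn2real e)))"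

definition hitting_time :: "(nat \<Rightarrow> 'a \<Rightarrow> real) \<Rightarrow> real \<Rightarrow> 'a \<Rightarrow> ennreal" where
  "hitting_time X \<epsilon> \<omega> =
     (if \<exists>t\<ge>1. X t \<omega> < \<epsilon> then of_nat (LEAST t. t \<ge> 1 \<and> X t \<omega> < \<epsilon>) else \<infinity>)"

end

theory Submission
  imports Defs "HOL-Real_Asymp.Real_Asymp"
begin

text \<open>Fix \<open>a\<close> with \<open>A < a < 1\<close>, so that \<open>E[X\<^sub>t] \<le> a\<^sup>t\<close> for \<open>t \<ge> T\<close>. Since \<open>\<tau>\<^sub>\<epsilon> > t + 1\<close>
  forces \<open>X\<^sub>t\<^sub>+\<^sub>1 \<ge> \<epsilon>\<close>, Markov's inequality gives \<open>P(\<tau>\<^sub>\<epsilon> > t + 1) \<le> min 1 (a\<^sup>t / \<epsilon>)\<close>,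
  and summing over \<open>t\<close> yields \<open>E[\<tau>\<^sub>\<epsilon>] \<le> ln \<epsilon> / ln a + O(1)\<close>: the bound \<open>1\<close> is used for
  the first \<open>T + \<lceil>ln \<epsilon> / ln a\<rceil>\<close> terms and the rest is a geometric series. Hence the
  limsup is at most \<open>-1 / ln a\<close>, and letting \<open>a\<close> decrease to \<open>A\<close> gives the theorem.\<close>

lemma power_nat_ceiling_log_le:
  fixes a \<epsilon> :: real
  assumes "0 < a" "a < 1" "0 < \<epsilon>"
  shows "a ^ nat \<lceil>ln \<epsilon> / ln a\<rceil> \<le> \<epsilon>"
proof -
  have "ln \<epsilon> / ln a \<le> real (nat \<lceil>ln \<epsilon> / ln a\<rceil>)" by linarith
  then have "real (nat \<lceil>ln \<epsilon> / ln a\<rceil>) * ln a \<le> ln \<epsilon>"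
    using assms by (simp add: divide_le_eq mult.commute)
  then have "ln (a ^ nat \<lceil>ln \<epsilon> / ln a\<rceil>) \<le> ln \<epsilon>"
    using assms by (simp add: ln_realpow)
  then show ?thesis
    using assms by simp
qed

lemma suminf_le_of_geometric_tail:
  fixes p :: "nat \<Rightarrow> ennreal" and a \<epsilon> :: real
  assumes a: "0 < a" "a < 1" and \<epsilon>: "0 < \<epsilon>" "\<epsilon> < 1"
    and le_1: "\<And>t. p t \<le> 1"
    and tail: "\<And>t. T \<le> t \<Longrightarrow> ennreal \<epsilon> * p t \<le> ennreal (a ^ t)"
  shows "(\<Sum>t. p t) \<le> ennreal (1 + real T + 1 / (1 - a) + ln \<epsilon> / ln a)"
proof -
  define N where "N = nat \<lceil>ln \<epsilon> / ln a\<rceil>"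
  define K where "K = T + N"
  \<comment> \<open>\<open>c\<close> dominates \<open>min 1 (a\<^sup>t / \<epsilon>)\<close> because \<open>a\<^sup>N \<le> \<epsilon>\<close>\<close>
  define c where "c = (\<lambda>t. if t < K then 1 else a ^ (t - K))"
  have "0 \<le> ln \<epsilon> / ln a"
    using a \<epsilon> by (simp add: divide_nonpos_neg)
  then have N_le: "real N \<le> ln \<epsilon> / ln a + 1"
    unfolding N_def by linarith
  have p_le_c: "p t \<le> ennreal (c t)" for t
  proof (cases "t < K")
    case False
    then have "ennreal \<epsilon> * p t \<le> ennreal (a ^ (t - K) * a ^ T * a ^ N)"
      using tail[of t] by (simp add: K_def power_add[symmetric])
    also have "\<dots> \<le> ennreal (\<epsilon> * a ^ (t - K))"
    proof (intro ennreal_leI)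
      have "a ^ T * a ^ N \<le> 1 * \<epsilon>"
        unfolding N_def using a \<epsilon>
        by (intro mult_mono power_le_one power_nat_ceiling_log_le) auto
      then show "a ^ (t - K) * a ^ T * a ^ N \<le> \<epsilon> * a ^ (t - K)"
        using a by (simp add: mult.assoc mult.commute mult_left_mono)
    qed
    finally show ?thesis
      using False a \<epsilon> by (simp add: c_def ennreal_mult'' ennreal_mult_le_mult_iff)
  qed (simp add: c_def le_1)
  have "(\<lambda>n. c (n + K)) = (\<lambda>n. a ^ n)"
    by (simp add: c_def fun_eq_iff)
  then have "summable c" and "suminf c = real K + 1 / (1 - a)"
    using summable_iff_shift[of c K] summable_geometric[of a] a
      suminf_split_initial_segment[of c K] suminf_geometric[of a]
    by (auto simp: c_def)
  have "(\<Sum>t. p t) \<le> (\<Sum>t. ennreal (c t))"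
    by (intro suminf_le p_le_c) auto
  also have "\<dots> = ennreal (real K + 1 / (1 - a))"
    using \<open>summable c\<close> \<open>suminf c = _\<close> a by (subst suminf_ennreal2) (auto simp: c_def)
  also have "\<dots> \<le> ennreal (1 + real T + 1 / (1 - a) + ln \<epsilon> / ln a)"
    using N_le by (intro ennreal_leI) (simp add: K_def)
  finally show ?thesis .
qed

lemma hitting_time_le_count:
  "hitting_time X \<epsilon> \<omega> \<le> 1 + (\<Sum>t. if \<epsilon> \<le> X (Suc t) \<omega> then 1 else (0::ennreal))"
proof (cases "\<exists>t\<ge>1. X t \<omega> < \<epsilon>")
  case True
  define n where "n = (LEAST t. t \<ge> 1 \<and> X t \<omega> < \<epsilon>)"
  have "n \<ge> 1"
    using LeastI_ex[of "\<lambda>t. t \<ge> 1 \<and> X t \<omega> < \<epsilon>"] True n_def by auto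
  have "\<epsilon> \<le> X (Suc t) \<omega>" if "t < n - 1" for t
    using not_less_Least[of "Suc t" "\<lambda>t. t \<ge> 1 \<and> X t \<omega> < \<epsilon>"] that
    unfolding n_def[symmetric] by linarith
  then have "of_nat (n - 1) = (\<Sum>t<n - 1. if \<epsilon> \<le> X (Suc t) \<omega> then 1 else (0::ennreal))"
    by simp
  also have "\<dots> \<le> (\<Sum>t. if \<epsilon> \<le> X (Suc t) \<omega> then 1 else 0)"
    by (rule sum_le_suminf) auto
  finally have "1 + of_nat (n - 1) \<le> 1 + (\<Sum>t. if \<epsilon> \<le> X (Suc t) \<omega> then 1 else (0::ennreal))"
    by (rule add_left_mono)
  moreover have "hitting_time X \<epsilon> \<omega> = 1 + of_nat (n - 1)"
    using True \<open>n \<ge> 1\<close> unfolding hitting_time_def n_def[symmetric]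
    by (metis of_nat_Suc Suc_diff_le diff_Suc_1 add.commute)
  ultimately show ?thesis by simp
next
  case False
  then have "(\<lambda>t. if \<epsilon> \<le> X (Suc t) \<omega> then 1 else (0::ennreal)) = (\<lambda>t. ennreal 1)"
    by (auto simp: fun_eq_iff not_less)
  moreover have "(\<Sum>t. ennreal 1) = \<top>"
    by (rule summable_iff_suminf_neq_top) (auto simp: summable_const_iff)
  ultimately show ?thesis by simp
qed

lemma Markov_inequality_nn_integral:
  assumes "X \<in> borel_measurable M" and "0 \<le> \<epsilon>"
  shows "ennreal \<epsilon> * emeasure M {x\<in>space M. \<epsilon> \<le> X x} \<le> (\<integral>\<^sup>+ x. ennreal (X x) \<partial>M)"
proof -
  have "{x\<in>space M. \<epsilon> \<le> X x} \<in> sets M"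
    using assms(1) by measurable
  then have "ennreal \<epsilon> * emeasure M {x\<in>space M. \<epsilon> \<le> X x}
      = (\<integral>\<^sup>+ x. ennreal \<epsilon> * indicator {x\<in>space M. \<epsilon> \<le> X x} x \<partial>M)"
    by (simp add: nn_integral_cmult_indicator)
  also have "\<dots> \<le> (\<integral>\<^sup>+ x. ennreal (X x) \<partial>M)"
    by (rule nn_integral_mono) (auto simp: indicator_def intro: ennreal_leI)
  finally show ?thesis .
qed

lemma (in prob_space) nn_integral_hitting_time_le:
  assumes "\<And>t. X t \<in> borel_measurable M"
  shows "(\<integral>\<^sup>+ \<omega>. hitting_time X \<epsilon> \<omega> \<partial>M)
    \<le> 1 + (\<Sum>t. emeasure M {\<omega>\<in>space M. \<epsilon> \<le> X (Suc t) \<omega>})"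
proof -
  have sets: "{\<omega>\<in>space M. \<epsilon> \<le> X (Suc t) \<omega>} \<in> sets M" for t
    using assms by measurable
  have "(\<integral>\<^sup>+ \<omega>. hitting_time X \<epsilon> \<omega> \<partial>M)
      \<le> (\<integral>\<^sup>+ \<omega>. 1 + (\<Sum>t. indicator {\<omega>\<in>space M. \<epsilon> \<le> X (Suc t) \<omega>} \<omega>) \<partial>M)"
  proof (rule nn_integral_mono)
    fix \<omega> assume "\<omega> \<in> space M"
    then have "(\<lambda>t. if \<epsilon> \<le> X (Suc t) \<omega> then 1 else (0::ennreal))
        = (\<lambda>t. indicator {\<omega>\<in>space M. \<epsilon> \<le> X (Suc t) \<omega>} \<omega>)"
      by (auto simp: fun_eq_iff indicator_def)
    then show "hitting_time X \<epsilon> \<omega> \<le> 1 + (\<Sum>t. indicator {\<omega>\<in>space M. \<epsilon> \<le> X (Suc t) \<omega>} \<omega>)"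
      using hitting_time_le_count[of X \<epsilon> \<omega>] by simp
  qed
  also have "\<dots> = 1 + (\<Sum>t. emeasure M {\<omega>\<in>space M. \<epsilon> \<le> X (Suc t) \<omega>})"
    using sets by (simp add: nn_integral_add nn_integral_suminf emeasure_space_1)
  finally show ?thesis .
qed

lemma (in prob_space) nn_integral_hitting_time_le_geometric:
  assumes meas: "\<And>t. X t \<in> borel_measurable M"
    and a: "0 < a" "a < 1" and \<epsilon>: "0 < \<epsilon>" "\<epsilon> < 1"
    and moment: "\<And>t. T \<le> t \<Longrightarrow> (\<integral>\<^sup>+ \<omega>. ennreal (X t \<omega>) \<partial>M) \<le> ennreal (a ^ t)"
  shows "(\<integral>\<^sup>+ \<omega>. hitting_time X \<epsilon> \<omega> \<partial>M) \<le> ennreal (2 + real T + 1 / (1 - a) + ln \<epsilon> / ln a)"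
proof -
  have tail: "ennreal \<epsilon> * emeasure M {\<omega>\<in>space M. \<epsilon> \<le> X (Suc t) \<omega>} \<le> ennreal (a ^ t)"
    if "T \<le> t" for t
  proof -
    have "ennreal \<epsilon> * emeasure M {\<omega>\<in>space M. \<epsilon> \<le> X (Suc t) \<omega>} \<le> ennreal (a ^ Suc t)"
      using Markov_inequality_nn_integral[OF meas, of \<epsilon> "Suc t"] moment[of "Suc t"] that \<epsilon>
      by force
    also have "\<dots> \<le> ennreal (a ^ t)"
      using a by (intro ennreal_leI power_decreasing) auto
    finally show ?thesis .
  qed
  have "0 \<le> ln \<epsilon> / ln a"
    using a \<epsilon> by (simp add: divide_nonpos_neg)
  have "(\<integral>\<^sup>+ \<omega>. hitting_time X \<epsilon> \<omega> \<partial>M)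
      \<le> 1 + (\<Sum>t. emeasure M {\<omega>\<in>space M. \<epsilon> \<le> X (Suc t) \<omega>})"
    using meas by (rule nn_integral_hitting_time_le)
  also have "\<dots> \<le> 1 + ennreal (1 + real T + 1 / (1 - a) + ln \<epsilon> / ln a)"
    using a \<epsilon> tail by (intro add_left_mono suminf_le_of_geometric_tail) (auto simp: emeasure_le_1)
  also have "\<dots> = ennreal (1 + (1 + real T + 1 / (1 - a) + ln \<epsilon> / ln a))"
    using a \<open>0 \<le> ln \<epsilon> / ln a\<close> by (subst ennreal_plus) auto
  also have "\<dots> = ennreal (2 + real T + 1 / (1 - a) + ln \<epsilon> / ln a)"
    by (simp add: algebra_simps)
  finally show ?thesis .
qed

lemma (in prob_space) Limsup_nn_integral_hitting_time_le:
  assumes meas: "\<And>t. X t \<in> borel_measurable M" and a: "0 < a" "a < 1"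
    and moment: "\<forall>\<^sub>F t in sequentially. (\<integral>\<^sup>+ \<omega>. ennreal (X t \<omega>) \<partial>M) \<le> ennreal (a ^ t)"
  shows "Limsup (at_right 0)
      (\<lambda>\<epsilon>. enn2ereal (\<integral>\<^sup>+ \<omega>. hitting_time X \<epsilon> \<omega> \<partial>M) / ereal \<bar>ln \<epsilon>\<bar>) \<le> ereal (-1 / ln a)"
proof -
  obtain T where T: "\<And>t. T \<le> t \<Longrightarrow> (\<integral>\<^sup>+ \<omega>. ennreal (X t \<omega>) \<partial>M) \<le> ennreal (a ^ t)"
    using moment by (auto simp: eventually_sequentially)
  define B where "B = 2 + real T + 1 / (1 - a)"
  have "\<forall>\<^sub>F \<epsilon> in at_right 0. enn2ereal (\<integral>\<^sup>+ \<omega>. hitting_time X \<epsilon> \<omega> \<partial>M) / ereal \<bar>ln \<epsilon>\<bar>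
      \<le> ereal (B / (- ln \<epsilon>) - 1 / ln a)"
    unfolding eventually_at_right_field
  proof (intro exI[of _ 1] conjI allI impI)
    fix \<epsilon> :: real assume \<epsilon>: "0 < \<epsilon>" "\<epsilon> < 1"
    then have "ln \<epsilon> < 0" by simp
    have "0 \<le> B + ln \<epsilon> / ln a"
      using a \<epsilon> by (simp add: B_def divide_nonpos_neg add_nonneg_nonneg)
    have "(\<integral>\<^sup>+ \<omega>. hitting_time X \<epsilon> \<omega> \<partial>M) \<le> ennreal (B + ln \<epsilon> / ln a)"
      using nn_integral_hitting_time_le_geometric[OF meas a \<epsilon> T] by (simp add: B_def)
    then have "enn2ereal (\<integral>\<^sup>+ \<omega>. hitting_time X \<epsilon> \<omega> \<partial>M) \<le> ereal (B + ln \<epsilon> / ln a)"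
      using \<open>0 \<le> B + ln \<epsilon> / ln a\<close> by (simp add: less_eq_ennreal.rep_eq enn2ereal_ennreal)
    then have "enn2ereal (\<integral>\<^sup>+ \<omega>. hitting_time X \<epsilon> \<omega> \<partial>M) / ereal \<bar>ln \<epsilon>\<bar>
        \<le> ereal (B + ln \<epsilon> / ln a) / ereal \<bar>ln \<epsilon>\<bar>"
      using \<open>ln \<epsilon> < 0\<close> by (intro ereal_divide_right_mono) auto
    also have "\<dots> = ereal (B / (- ln \<epsilon>) - 1 / ln a)"
      using \<open>ln \<epsilon> < 0\<close> a by (simp add: ereal_divide field_simps)
    finally show "enn2ereal (\<integral>\<^sup>+ \<omega>. hitting_time X \<epsilon> \<omega> \<partial>M) / ereal \<bar>ln \<epsilon>\<bar>
        \<le> ereal (B / (- ln \<epsilon>) - 1 / ln a)" .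
  qed simp
  then have "Limsup (at_right 0)
      (\<lambda>\<epsilon>. enn2ereal (\<integral>\<^sup>+ \<omega>. hitting_time X \<epsilon> \<omega> \<partial>M) / ereal \<bar>ln \<epsilon>\<bar>)
      \<le> Limsup (at_right 0) (\<lambda>\<epsilon>. ereal (B / (- ln \<epsilon>) - 1 / ln a))"
    by (rule Limsup_mono)
  also have "\<dots> = ereal (-1 / ln a)"
  proof (rule lim_imp_Limsup)
    have "((\<lambda>\<epsilon>. B / (- ln \<epsilon>) - 1 / ln a) \<longlongrightarrow> 0 - 1 / ln a) (at_right (0::real))"
      by (intro tendsto_diff tendsto_const) real_asymp
    then show "((\<lambda>\<epsilon>. ereal (B / (- ln \<epsilon>) - 1 / ln a)) \<longlongrightarrow> ereal (-1 / ln a)) (at_right 0)"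
      by (intro tendsto_ereal) simp
  qed simp
  finally show ?thesis .
qed

lemma limsup_root_moment_nonneg: "0 \<le> limsup (\<lambda>t. root_moment t (e t))"
  by (rule le_Limsup) (auto simp: root_moment_def intro!: always_eventually real_root_ge_zero)

lemma eventually_le_geometric_of_limsup_root_moment:
  assumes "limsup (\<lambda>t. root_moment t (e t)) < ereal a"
  shows "\<forall>\<^sub>F t in sequentially. e t \<le> ennreal (a ^ t)"
  using Limsup_lessD[OF assms] eventually_gt_at_top[of 0]
proof eventually_elim
  case (elim t)
  then have fin: "e t \<noteq> \<infinity>" and "root t (enn2real (e t)) < a"
    by (auto simp: root_moment_def split: if_splits)
  then have "root t (enn2real (e t)) ^ t < a ^ t"
    by (intro power_strict_mono) (auto simp: \<open>0 < t\<close>)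
  then have "enn2real (e t) < a ^ t"
    using \<open>0 < t\<close> by (simp add: real_root_pow_pos2)
  then have "ennreal (enn2real (e t)) \<le> ennreal (a ^ t)"
    by (intro ennreal_leI) simp
  then show ?case
    using fin by (simp add: less_top)
qed

lemma le_neg_inv_ln_of_le_above:
  fixes A L :: ereal
  assumes "0 \<le> A" "A < 1"
    and above: "\<And>a. A < ereal a \<Longrightarrow> a < 1 \<Longrightarrow> L \<le> ereal (-1 / ln a)"
  shows "L \<le> (if A = 0 then 0 else ereal (-1 / ln (real_of_ereal A)))"
proof (rule dense_ge)
  fix y assume y: "(if A = 0 then 0 else ereal (-1 / ln (real_of_ereal A))) < y"
  show "L \<le> y"
  proof (cases y)
    case (real r)
    obtain q where q: "A = ereal q" "0 \<le> q" "q < 1"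
      using assms(1,2) by (cases A) auto
    \<comment> \<open>the witness is \<open>a = exp (-1 / r)\<close>, for which \<open>-1 / ln a = r\<close>\<close>
    have r: "0 < r \<and> q < exp (-1 / r)"
    proof (cases "q = 0")
      case True
      then show ?thesis using y real q by simp
    next
      case False
      then have lq: "ln q < 0" using q by simp
      have "-1 / ln q < r" using y real q False by simp
      moreover have "0 < -1 / ln q" using lq by simp
      ultimately have "0 < r" by linarith
      have "r * ln q < -1"
        using \<open>-1 / ln q < r\<close> lq by (simp add: field_simps)
      then have "ln q < -1 / r" using \<open>0 < r\<close> by (simp add: field_simps)
      then have "exp (ln q) < exp (-1 / r)" by simp
      then show ?thesis using \<open>0 < r\<close> q False by simp
    qed
    have "L \<le> ereal (-1 / ln (exp (-1 / r)))"
      using r q by (intro above) auto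
    then show ?thesis using real r by simp
  qed (use y in auto)
qed

theorem theorem2:
  fixes M :: "'a measure" and X :: "nat \<Rightarrow> 'a \<Rightarrow> real" and A :: ereal
  assumes "prob_space M"
    and "\<And>t. X t \<in> borel_measurable M"
    and "\<And>t \<omega>. \<omega> \<in> space M \<Longrightarrow> X t \<omega> \<ge> 0"
    and A_def: "A = limsup (\<lambda>t. root_moment t (\<integral>\<^sup>+ \<omega>. ennreal (X t \<omega>) \<partial>M))"
    and "A < 1"
  shows "Limsup (at_right (0::real))
           (\<lambda>\<epsilon>. enn2ereal (\<integral>\<^sup>+ \<omega>. hitting_time X \<epsilon> \<omega> \<partial>M) / ereal \<bar>ln \<epsilon>\<bar>)
         \<le> (if A = 0 then 0 else ereal (-1 / ln (real_of_ereal A)))"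
proof (rule le_neg_inv_ln_of_le_above)
  interpret prob_space M by fact
  show "0 \<le> A"
    unfolding A_def by (rule limsup_root_moment_nonneg)
  show "A < 1" by fact
  fix a assume "A < ereal a" and "a < 1"
  with \<open>0 \<le> A\<close> have "0 < a"
    by (metis ereal_less(2) order_le_less_trans)
  have "\<forall>\<^sub>F t in sequentially. (\<integral>\<^sup>+ \<omega>. ennreal (X t \<omega>) \<partial>M) \<le> ennreal (a ^ t)"
    using \<open>A < ereal a\<close> unfolding A_def by (rule eventually_le_geometric_of_limsup_root_moment)
  then show "Limsup (at_right 0)
      (\<lambda>\<epsilon>. enn2ereal (\<integral>\<^sup>+ \<omega>. hitting_time X \<epsilon> \<omega> \<partial>M) / ereal \<bar>ln \<epsilon>\<bar>) \<le> ereal (-1 / ln a)"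
    by (rule Limsup_nn_integral_hitting_time_le[OF assms(2) \<open>0 < a\<close> \<open>a < 1\<close>])
qed

end
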